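(* If a choice probability function $q_1$ is QRUM-rationalizable, then it is APT-rationalizable (viewed as the function $q_1(p_1,y):=q_1(p_1)$ of price and income).
   Context: Two goods: good 0 with price $0$ and good 1 with price $p_1\ge0$; all consumers have common income $y>0$, choose one good and spend the remainder on a numeraire. The set of incomes and prices considered is such that prices are small relative to income (the paper writes $p_1\ll y$); in particular $0\le p_1\le y$, and the prices $p_L,p_H$ below lie in $[0,y]$ for every income $y$ considered. QRUM: $q_1$ (a function of price only) is QRUM-rationalizable if there exist a random variable $\eta$ with distribution $H$ and functions $V_0,V_1$, $\beta>0$ (utilities $U_0(y,\eta)=V_0(\eta)+\beta(\eta)y$, $U_1(y-p_1,\eta)=V_1(\eta)+\beta(\eta)(y-p_1)$) such that $q_1(p_1)=\int\mathbb{1}\{V_0(\eta)\le V_1(\eta)-\beta(\eta)p_1\}\,dH(\eta)$ for all $p_1$, where (i) for every $p_1$, $\int\mathbb{1}\{V_0(\eta)=V_1(\eta)-\beta(\eta)p_1\}\,dH(\eta)=0$; (ii) there exist $p_L$ with $\lim_{p_1\searrow p_L}\Pr[V_0(\eta)\le V_1(\eta)-\beta(\eta)p_1]=1$ and $p_H$ with $\lim_{p_1\nearrow p_H}\Pr[V_0(\eta)\le V_1(\eta)-\beta(\eta)p_1]=0$. APT: a function $q_1(p_1,y)$ is APT-rationalizable if there exist $U_0:(0,\infty)\to[0,\infty)$ non-decreasing, $U_1:[0,\infty)\to[0,\infty)$ continuous and strictly increasing, with: for every income $y$ there is $\bar p_1\in[0,y]$ with $U_0(y)\ge U_1(y-\bar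 p_1)$; and a CDF $G$ with $G(0)=0$, such that $q_{1}(p_{1},y)=\mathbb{1}\{U_{0}(y)<U_{1}(y-p_{1})\}\,(1-G(p_{1}))$ for all incomes $y$ and prices $p_1\in[0,y]$ considered. *)

theory Defs
  imports "HOL-Probability.Probability"
begin

definition prices_considered :: "real set \<Rightarrow> real set" where
  "prices_considered Y = {p. \<exists>y\<in>Y. 0 \<le> p \<and> p \<le> y}"

definition is_CDF :: "(real \<Rightarrow> real) \<Rightarrow> bool" where
  "is_CDF G \<longleftrightarrow> (\<exists>M. real_distribution M \<and> G = cdf M)"

definition QRUM_rationalizable :: "'e itself \<Rightarrow> real set \<Rightarrow> (real \<Rightarrow> real) \<Rightarrow> bool" where
  "QRUM_rationalizable (ty :: 'e itself) Y q1 \<longleftrightarrow>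
     (\<exists>(H :: 'e measure) V0 V1 \<beta>.
        prob_space H \<and>
        V0 \<in> borel_measurable H \<and> V1 \<in> borel_measurable H \<and> \<beta> \<in> borel_measurable H \<and>
        (\<forall>\<eta>\<in>space H. \<beta> \<eta> > 0) \<and>
        (\<forall>p\<in>prices_considered Y.
           q1 p = measure H {\<eta>\<in>space H. V0 \<eta> \<le> V1 \<eta> - \<beta> \<eta> * p}) \<and>
        (\<forall>p\<in>prices_considered Y.
           measure H {\<eta>\<in>space H. V0 \<eta> = V1 \<eta> - \<beta> \<eta> * p} = 0) \<and>
        (\<exists>pL pH. (\<forall>y\<in>Y. 0 \<le> pL \<and> pL \<le> y \<and> 0 \<le> pH \<and> pH \<le> y) \<and>
           ((\<lambda>p. measure H {\<eta>\<in>space H. V0 \<eta> \<le> V1 \<eta> - \<beta> \<eta> * p}) \<longlongrightarrow> 1) (at_right pL) \<and>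
           ((\<lambda>p. measure H {\<eta>\<in>space H. V0 \<eta> \<le> V1 \<eta> - \<beta> \<eta> * p}) \<longlongrightarrow> 0) (at_left pH)))"

definition APT_rationalizable :: "real set \<Rightarrow> (real \<Rightarrow> real \<Rightarrow> real) \<Rightarrow> bool" where
  "APT_rationalizable Y q1 \<longleftrightarrow>
     (\<exists>(U0 :: real \<Rightarrow> real) (U1 :: real \<Rightarrow> real) (G :: real \<Rightarrow> real).
        mono_on {0<..} U0 \<and> (\<forall>y>0. U0 y \<ge> 0) \<and>
        continuous_on {0..} U1 \<and> strict_mono_on {0..} U1 \<and> (\<forall>x\<ge>0. U1 x \<ge> 0) \<and>
        (\<forall>y\<in>Y. \<exists>pbar. 0 \<le> pbar \<and> pbar \<le> y \<and> U0 y \<ge> U1 (y - pbar)) \<and>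
        is_CDF G \<and> G 0 = 0 \<and>
        (\<forall>y\<in>Y. \<forall>p1. 0 \<le> p1 \<and> p1 \<le> y \<longrightarrow>
           q1 p1 y = (if U0 y < U1 (y - p1) then 1 else 0) * (1 - G p1)))"

end

theory Submission
  imports Defs
begin

text \<open>A consumer of type \<eta> buys good 1 at price p exactly when p is at most the willingness
  to pay X \<eta> = (V1 \<eta> - V0 \<eta>) / \<beta> \<eta>, so q1 is the survival function of X.  Since ties have
  probability zero, q1 = 1 - G for the distribution function G of X; as q1 is antitone, the
  limits at pL and pH force q1 0 = 1 and q1 y = 0 for every income y.  With U0 = 0 and U1 the
  identity the APT indicator is 1{p < y}, which only matters at p = y, where q1 vanishes anyway.\<close>

lemma le_diff_mult_iff_le_divide:
  fixes v0 v1 b p :: real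
  assumes "b > 0"
  shows "v0 \<le> v1 - b * p \<longleftrightarrow> p \<le> (v1 - v0) / b"
  using assms by (simp add: pos_le_divide_eq algebra_simps)

lemma eq_diff_mult_iff_eq_divide:
  fixes v0 v1 b p :: real
  assumes "b > 0"
  shows "v0 = v1 - b * p \<longleftrightarrow> p = (v1 - v0) / b"
  using assms by (auto simp: field_simps)

lemma antimono_tendsto_at_right_le:
  fixes f :: "'a::{linorder_topology, dense_order, no_top} \<Rightarrow> 'b::linorder_topology"
  assumes "antimono f" and "(f \<longlongrightarrow> l) (at_right a)" and "x \<le> a"
  shows "l \<le> f x"
proof (rule tendsto_upperbound[OF assms(2)])
  show "\<forall>\<^sub>F t in at_right a. f t \<le> f x"
    using eventually_at_right_less[of a]
    by eventually_elim (use assms(1,3) in \<open>auto simp: antimono_def\<close>)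
qed simp

lemma antimono_tendsto_at_left_ge:
  fixes f :: "'a::{linorder_topology, dense_order, no_bot} \<Rightarrow> 'b::linorder_topology"
  assumes "antimono f" and "(f \<longlongrightarrow> l) (at_left b)" and "b \<le> x"
  shows "f x \<le> l"
proof (rule tendsto_lowerbound[OF assms(2)])
  have "\<forall>\<^sub>F t in at_left b. t < b"
    by (simp add: eventually_at_filter)
  then show "\<forall>\<^sub>F t in at_left b. f x \<le> f t"
    by eventually_elim (use assms(1,3) in \<open>auto simp: antimono_def\<close>)
qed simp

context prob_space
begin

lemma antimono_prob_ge:
  fixes X :: "'a \<Rightarrow> real"
  assumes "X \<in> borel_measurable M"
  shows "antimono (\<lambda>p. prob {x\<in>space M. p \<le> X x})"
proof (rule antimonoI)
  fix p p' :: real assume "p \<le> p'"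
  moreover have "{x\<in>space M. p \<le> X x} \<in> events"
    using assms by measurable
  ultimately show "prob {x\<in>space M. p' \<le> X x} \<le> prob {x\<in>space M. p \<le> X x}"
    by (intro finite_measure_mono) auto
qed

lemma prob_ge_eq_1_minus_cdf:
  fixes X :: "'a \<Rightarrow> real"
  assumes X: "X \<in> borel_measurable M" and tie: "prob {x\<in>space M. X x = p} = 0"
  shows "prob {x\<in>space M. p \<le> X x} = 1 - cdf (distr M borel X) p"
proof -
  let ?less = "{x\<in>space M. X x < p}" and ?tie = "{x\<in>space M. X x = p}"
  have "cdf (distr M borel X) p = prob (?less \<union> ?tie)"
  proof -
    have "X -` {..p} \<inter> space M = ?less \<union> ?tie"
      by auto
    then show ?thesis
      using X by (simp add: cdf_def measure_distr)
  qed
  also have "\<dots> = prob ?less"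
    using X tie by (intro measure_Un_null_set) (auto simp: null_sets_def emeasure_eq_measure)
  also have "\<dots> = 1 - prob {x\<in>space M. p \<le> X x}"
  proof -
    have "?less = space M - {x\<in>space M. p \<le> X x}"
      by auto
    moreover have "{x\<in>space M. p \<le> X x} \<in> events"
      using X by measurable
    ultimately show ?thesis
      using prob_compl by simp
  qed
  finally show ?thesis by simp
qed

end

lemma ex_CDF_zero_at_0: "\<exists>G. is_CDF G \<and> G 0 = 0"
proof -
  have "real_distribution (return borel (1::real))"
    by (simp add: real_distribution_def real_distribution_axioms_def prob_space_return)
  moreover have "cdf (return borel (1::real)) 0 = 0"
    by (simp add: cdf_def measure_return)
  ultimately show ?thesis
    unfolding is_CDF_def by blast
qed

lemma APT_rationalizable_price_only:
  fixes q1 G :: "real \<Rightarrow> real"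
  assumes "Y \<subseteq> {0<..}" and "is_CDF G" and "G 0 = 0"
    and below_income: "\<And>y p. y \<in> Y \<Longrightarrow> 0 \<le> p \<Longrightarrow> p < y \<Longrightarrow> q1 p = 1 - G p"
    and at_income: "\<And>y. y \<in> Y \<Longrightarrow> q1 y = 0"
  shows "APT_rationalizable Y (\<lambda>p1 y. q1 p1)"
  unfolding APT_rationalizable_def
proof (intro exI conjI)
  show "\<forall>y\<in>Y. \<exists>pbar. 0 \<le> pbar \<and> pbar \<le> y \<and> (\<lambda>_. 0::real) y \<ge> id (y - pbar)"
  proof
    fix y assume "y \<in> Y"
    with assms(1) show "\<exists>pbar. 0 \<le> pbar \<and> pbar \<le> y \<and> (\<lambda>_. 0::real) y \<ge> id (y - pbar)"
      by (intro exI[of _ y]) auto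
  qed
  show "\<forall>y\<in>Y. \<forall>p1. 0 \<le> p1 \<and> p1 \<le> y \<longrightarrow>
      q1 p1 = (if (\<lambda>_. 0::real) y < id (y - p1) then 1 else 0) * (1 - G p1)"
    using below_income at_income by (force simp: le_less)
qed (use assms(2,3) in \<open>auto simp: mono_on_def strict_mono_on_def\<close>)

lemma QRUM_rationalizable_obtain_willingness_to_pay:
  fixes q1 :: "real \<Rightarrow> real"
  assumes "QRUM_rationalizable TYPE('e) Y q1"
  obtains H :: "'e measure" and X :: "'e \<Rightarrow> real" and pL pH
  where "prob_space H" and "X \<in> borel_measurable H"
    and "\<And>p. p \<in> prices_considered Y \<Longrightarrow> q1 p = measure H {\<eta>\<in>space H. p \<le> X \<eta>}"
    and "\<And>p. p \<in> prices_considered Y \<Longrightarrow> measure H {\<eta>\<in>space H. X \<eta> = p} = 0"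
    and "\<And>y. y \<in> Y \<Longrightarrow> 0 \<le> pL \<and> pL \<le> y \<and> pH \<le> y"
    and "((\<lambda>p. measure H {\<eta>\<in>space H. p \<le> X \<eta>}) \<longlongrightarrow> 1) (at_right pL)"
    and "((\<lambda>p. measure H {\<eta>\<in>space H. p \<le> X \<eta>}) \<longlongrightarrow> 0) (at_left pH)"
proof -
  obtain H :: "'e measure" and V0 V1 \<beta> pL pH where
    "prob_space H" and meas: "V0 \<in> borel_measurable H" "V1 \<in> borel_measurable H"
      "\<beta> \<in> borel_measurable H"
    and \<beta>_pos: "\<forall>\<eta>\<in>space H. \<beta> \<eta> > 0"
    and q1_eq: "\<forall>p\<in>prices_considered Y. q1 p = measure H {\<eta>\<in>space H. V0 \<eta> \<le> V1 \<eta> - \<beta> \<eta> * p}"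
    and ties: "\<forall>p\<in>prices_considered Y. measure H {\<eta>\<in>space H. V0 \<eta> = V1 \<eta> - \<beta> \<eta> * p} = 0"
    and bounds: "\<forall>y\<in>Y. 0 \<le> pL \<and> pL \<le> y \<and> 0 \<le> pH \<and> pH \<le> y"
    and lim_pL: "((\<lambda>p. measure H {\<eta>\<in>space H. V0 \<eta> \<le> V1 \<eta> - \<beta> \<eta> * p}) \<longlongrightarrow> 1) (at_right pL)"
    and lim_pH: "((\<lambda>p. measure H {\<eta>\<in>space H. V0 \<eta> \<le> V1 \<eta> - \<beta> \<eta> * p}) \<longlongrightarrow> 0) (at_left pH)"
    using assms unfolding QRUM_rationalizable_def by blast
  define X where "X \<eta> = (V1 \<eta> - V0 \<eta>) / \<beta> \<eta>" for \<eta>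
  have "X \<in> borel_measurable H"
    unfolding X_def using meas by measurable
  moreover have
    "{\<eta>\<in>space H. V0 \<eta> \<le> V1 \<eta> - \<beta> \<eta> * p} = {\<eta>\<in>space H. p \<le> X \<eta>}" for p
    unfolding X_def using \<beta>_pos by (auto simp: le_diff_mult_iff_le_divide)
  moreover have "{\<eta>\<in>space H. V0 \<eta> = V1 \<eta> - \<beta> \<eta> * p} = {\<eta>\<in>space H. X \<eta> = p}" for p
    unfolding X_def using \<beta>_pos by (auto simp: eq_diff_mult_iff_eq_divide)
  ultimately show thesis
    using that[of H X pL pH] \<open>prob_space H\<close> q1_eq ties bounds lim_pL lim_pH by simp
qed

lemma QRUM_rationalizable_obtain_willingness_to_pay_distribution:
  fixes q1 :: "real \<Rightarrow> real"
  assumes "QRUM_rationalizable TYPE('e) Y q1" and "y0 \<in> Y"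
  obtains W where "real_distribution W" and "cdf W 0 = 0"
    and "\<And>p. p \<in> prices_considered Y \<Longrightarrow> q1 p = 1 - cdf W p"
    and "\<And>y. y \<in> Y \<Longrightarrow> q1 y = 0"
proof -
  obtain H :: "'e measure" and X pL pH where "prob_space H" and X_meas: "X \<in> borel_measurable H"
    and q1_eq: "\<And>p. p \<in> prices_considered Y \<Longrightarrow> q1 p = measure H {\<eta>\<in>space H. p \<le> X \<eta>}"
    and ties: "\<And>p. p \<in> prices_considered Y \<Longrightarrow> measure H {\<eta>\<in>space H. X \<eta> = p} = 0"
    and bounds: "\<And>y. y \<in> Y \<Longrightarrow> 0 \<le> pL \<and> pL \<le> y \<and> pH \<le> y"
    and lim_pL: "((\<lambda>p. measure H {\<eta>\<in>space H. p \<le> X \<eta>}) \<longlongrightarrow> 1) (at_right pL)"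
    and lim_pH: "((\<lambda>p. measure H {\<eta>\<in>space H. p \<le> X \<eta>}) \<longlongrightarrow> 0) (at_left pH)"
    using QRUM_rationalizable_obtain_willingness_to_pay[OF assms(1)] by blast
  interpret prob_space H by fact
  define S where "S p = prob {\<eta>\<in>space H. p \<le> X \<eta>}" for p
  have S_antimono: "antimono S"
    unfolding S_def using X_meas by (rule antimono_prob_ge)
  have "0 \<le> pL" "pL \<le> y0"
    using bounds[OF assms(2)] by auto
  have "S 0 = 1"
    using antimono_tendsto_at_right_le[OF S_antimono lim_pL[folded S_def] \<open>0 \<le> pL\<close>]
    unfolding S_def by (simp add: antisym)
  have S_income: "S y = 0" if "y \<in> Y" for y
    using antimono_tendsto_at_left_ge[OF S_antimono lim_pH[folded S_def]] bounds[OF that]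
    unfolding S_def by (simp add: antisym)
  have S_eq: "S p = 1 - cdf (distr H borel X) p" if "p \<in> prices_considered Y" for p
    unfolding S_def using X_meas ties[OF that] by (rule prob_ge_eq_1_minus_cdf)
  have "0 \<in> prices_considered Y"
    using \<open>0 \<le> pL\<close> \<open>pL \<le> y0\<close> assms(2) unfolding prices_considered_def
    by (intro CollectI bexI[of _ y0]) auto
  moreover have "y \<in> prices_considered Y" if "y \<in> Y" for y
    using that bounds unfolding prices_considered_def by force
  ultimately show thesis
    using that[of "distr H borel X"] X_meas \<open>S 0 = 1\<close> S_eq S_income q1_eq
    unfolding S_def by force
qed

theorem theorem3:
  fixes Y :: "real set" and q1 :: "real \<Rightarrow> real"
  assumes "Y \<subseteq> {0<..}"
    and "QRUM_rationalizable TYPE('e) Y q1"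
  shows "APT_rationalizable Y (\<lambda>p1 y. q1 p1)"
proof (cases "Y = {}")
  case True
  then show ?thesis
    using ex_CDF_zero_at_0 APT_rationalizable_price_only[OF assms(1)] by auto
next
  case False
  then obtain y0 where "y0 \<in> Y" by blast
  obtain W where W: "real_distribution W" "cdf W 0 = 0"
    and below_income: "\<And>p. p \<in> prices_considered Y \<Longrightarrow> q1 p = 1 - cdf W p"
    and at_income: "\<And>y. y \<in> Y \<Longrightarrow> q1 y = 0"
    using QRUM_rationalizable_obtain_willingness_to_pay_distribution[OF assms(2) \<open>y0 \<in> Y\<close>]
    by blast
  show ?thesis
  proof (rule APT_rationalizable_price_only[OF assms(1)])
    show "is_CDF (cdf W)"
      unfolding is_CDF_def using W(1) by blast
    show "q1 p = 1 - cdf W p" if "y \<in> Y" "0 \<le> p" "p < y" for y p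
      using that below_income[of p] unfolding prices_considered_def by force
  qed (use W(2) at_income in auto)
qed

end
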